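(* Let $(A,\mathfrak{g},\omega)$ be an $n$-plectic structure and let $f\in\mathcal{P}ois(A,\mathfrak{g},\omega)$ be a Poisson cotensor. Then $\ker(\omega)\subset\ker(f)$. Moreover, if $y,y'$ are tensors with $i_y\omega=f$ and $i_{y'}\omega=f$, then $y-y'\in\ker(\omega)$ and $i_yg=i_{y'}g$ for all $g\in\mathcal{P}ois(A,\mathfrak{g},\omega)$. Similarly, if $x,x'$ are tensors with $i_x\omega=df$ and $i_{x'}\omega=df$, then $x-x'\in\ker(\omega)$ and $i_xg=i_{x'}g$ for all $g\in\mathcal{P}ois(A,\mathfrak{g},\omega)$.
   Context: A Lie Rinehart pair $(A,\mathfrak{g})$ consists of a commutative associative unital $\mathbb{R}$-algebra $A$ and a real Lie algebra $\mathfrak{g}$ that is an $A$-module, together with a Lie algebra morphism (anchor) $D:\mathfrak{g}\to\mathrm{Der}(A)$, $x\mapsto D_x$, such that $[x,a y]=D_x(a)y+a[x,y]$ for all $x,y\in\mathfrak{g}$ and $a\in A$. It is torsionless if the canonical map $\mathfrak{g}\to\mathfrak{g}^{\vee\vee}$, where $\mathfrak{g}^\vee=\mathrm{Hom}_A(\mathfrak{g},A)$, is injective. Set $X(\mathfrak{g},A)=\bigoplus_{k\ge0}\Lambda^k_A\mathfrak{g}$ (tensors, $\Lambda^0=A$) and $\Omega(\mathfrak{g},A)=\bigoplus_{k\ge0}\Lambda^k_A\mathfrak{g}^\vee$ (cotensors), each with its exterior product $\wedge$. Tensor grading: $|x|=k$ for $x\in\Lambda^k_A\mathfrak{g}$ and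 $|f|=-k$ for $f\in\Lambda^k_A\mathfrak{g}^\vee$. The natural pairing is the $A$-bilinear map with $\langle f_1\wedge\cdots\wedge f_k,x_1\wedge\cdots\wedge x_k\rangle=\sum_{s\in S_k}\mathrm{sgn}(s)\langle f_{s(1)},x_1\rangle\cdots\langle f_{s(k)},x_k\rangle$ (where $\langle f,x\rangle=f(x)$ for $f\in\mathfrak{g}^\vee,x\in\mathfrak{g}$ and $\langle a,b\rangle=ab$ on $A$), and zero between components of different exterior degree. For a tensor $x$ the right contraction $i_x:\Omega\to\Omega$ is determined by $\langle i_xf,z\rangle=\langle f,x\wedge z\rangle$ for all tensors $z$. The de Rham differential is given for $f\in\Lambda^k_A\mathfrak{g}^\vee$ by $df(x_0\wedge\cdots\wedge x_k)=\sum_j(-1)^jD_{x_j}(f(x_0\wedge\cdots\widehat{x_j}\cdots\wedge x_k))+\sum_{i<j}(-1)^{i+j}f([x_i,x_j]\wedge x_0\wedge\cdots\widehat{x_i}\cdots\widehat{x_j}\cdots\wedge x_k)$. For a cotensor $f$, $\ker(f)=\{x\in X(\mathfrak{g},A): i_xf=0\}$. An $n$-plectic structure $(A,\mathfrak{g},\omega)$ is a torsionless Lie Rinehart pair with $\omega\in\Lambda^{n+1}_A\mathfrak{g}^\vee$ and $d\omega=0$. A tensor $x$ is a Hamilton tensor associated to the (Hamilton) cotensor $f$ if $i_x\omega=df$. A Poisson cotensor is a Hamilton cotensor $f$ for which there is a tensor $y$ with $i_y\omega=f$ ($y$ is called a Poisson constraint associated to $f$); $\mathcal{P}ois(A,\mathfrak{g},\omega)$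 denotes the set of Poisson cotensors. *)

theory Defs
  imports Complex_Main "HOL-Combinatorics.Permutations"
begin

text \<open>
  A is a type 'a of class comm_ring_1 and real_algebra_1
  (commutative associative unital real algebra).  The Lie algebra g is a type 'g
  (abelian group) with an A-module action smul, a bracket br and an anchor D.
  The real vector space structure of g is the one induced by of_real.

  Tensors (elements of X(g,A) = direct sum of the exterior powers of g) are
  represented by finitely supported functions 'g list => 'a: the formal
  A-linear combination of the words x1 ... xk, a word standing for x1 wedge ... wedge xk.
  Cotensors (elements of Omega(g,A)) are represented likewise by finitely supported
  functions ('g => 'a) list => 'a whose support consists of lists of elements of the
  dual module g^v = Hom_A(g,A).  All notions below (pairing, contraction, kernel,
  de Rham differential) are computed on representatives and are compatible with the
  defining relations of the exterior powers.
\<close>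

definition is_A_module :: "('a::{comm_ring_1,real_algebra_1} \<Rightarrow> 'g::ab_group_add \<Rightarrow> 'g) \<Rightarrow> bool" where
  "is_A_module smul \<longleftrightarrow>
     (\<forall>a x y. smul a (x + y) = smul a x + smul a y) \<and>
     (\<forall>a b x. smul (a + b) x = smul a x + smul b x) \<and>
     (\<forall>a b x. smul (a * b) x = smul a (smul b x)) \<and>
     (\<forall>x. smul 1 x = x)"

definition is_real_lie_algebra :: "('a::{comm_ring_1,real_algebra_1} \<Rightarrow> 'g::ab_group_add \<Rightarrow> 'g) \<Rightarrow> ('g \<Rightarrow> 'g \<Rightarrow> 'g) \<Rightarrow> bool" where
  "is_real_lie_algebra smul br \<longleftrightarrow>
     (\<forall>x y z. br (x + y) z = br x z + br y z) \<and>
     (\<forall>x y z. br x (y + z) = br x y + br x z) \<and>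
     (\<forall>r::real. \<forall>x y. br (smul (of_real r) x) y = smul (of_real r) (br x y)) \<and>
     (\<forall>r::real. \<forall>x y. br x (smul (of_real r) y) = smul (of_real r) (br x y)) \<and>
     (\<forall>x. br x x = 0) \<and>
     (\<forall>x y z. br x (br y z) + br y (br z x) + br z (br x y) = 0)"

definition is_derivation :: "('a::{comm_ring_1,real_algebra_1} \<Rightarrow> 'a) \<Rightarrow> bool" where
  "is_derivation \<delta> \<longleftrightarrow>
     (\<forall>a b. \<delta> (a + b) = \<delta> a + \<delta> b) \<and>
     (\<forall>r::real. \<forall>a. \<delta> (of_real r * a) = of_real r * \<delta> a) \<and>
     (\<forall>a b. \<delta> (a * b) = \<delta> a * b + a * \<delta> b)"

definition lie_rinehart_pair ::
  "('a::{comm_ring_1,real_algebra_1} \<Rightarrow> 'g::ab_group_add \<Rightarrow> 'g) \<Rightarrow> ('g \<Rightarrow> 'g \<Rightarrow> 'g) \<Rightarrow> ('g \<Rightarrow> 'a \<Rightarrow> 'a) \<Rightarrow> bool" where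
  "lie_rinehart_pair smul br D \<longleftrightarrow>
     is_A_module smul \<and> is_real_lie_algebra smul br \<and>
     (\<forall>x. is_derivation (D x)) \<and>
     \<comment> \<open>D is a morphism of real Lie algebras g -> Der(A)\<close>
     (\<forall>x y a. D (x + y) a = D x a + D y a) \<and>
     (\<forall>r::real. \<forall>x a. D (smul (of_real r) x) a = of_real r * D x a) \<and>
     (\<forall>x y a. D (br x y) a = D x (D y a) - D y (D x a)) \<and>
     \<comment> \<open>Leibniz rule\<close>
     (\<forall>x y a. br x (smul a y) = smul (D x a) y + smul a (br x y))"

definition dual :: "('a::comm_ring_1 \<Rightarrow> 'g::ab_group_add \<Rightarrow> 'g) \<Rightarrow> ('g \<Rightarrow> 'a) set" where
  "dual smul = {\<phi>. (\<forall>x y. \<phi> (x + y) = \<phi> x + \<phi> y) \<and> (\<forall>a x. \<phi> (smul a x) = a * \<phi> x)}"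

definition torsionless :: "('a::comm_ring_1 \<Rightarrow> 'g::ab_group_add \<Rightarrow> 'g) \<Rightarrow> bool" where
  "torsionless smul \<longleftrightarrow> (\<forall>x. (\<forall>\<phi>\<in>dual smul. \<phi> x = 0) \<longrightarrow> x = 0)"

definition tensor :: "('g list \<Rightarrow> 'a::zero) \<Rightarrow> bool" where
  "tensor t \<longleftrightarrow> finite {w. t w \<noteq> 0}"

definition cotensor :: "('a::comm_ring_1 \<Rightarrow> 'g::ab_group_add \<Rightarrow> 'g) \<Rightarrow> (('g \<Rightarrow> 'a) list \<Rightarrow> 'a) \<Rightarrow> bool" where
  "cotensor smul f \<longleftrightarrow> finite {fs. f fs \<noteq> 0} \<and> (\<forall>fs. f fs \<noteq> 0 \<longrightarrow> set fs \<subseteq> dual smul)"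

definition cotensor_deg :: "(('g \<Rightarrow> 'a) list \<Rightarrow> 'a::zero) \<Rightarrow> nat \<Rightarrow> bool" where
  "cotensor_deg f k \<longleftrightarrow> (\<forall>fs. f fs \<noteq> 0 \<longrightarrow> length fs = k)"

definition wedge :: "('g list \<Rightarrow> 'a::comm_ring_1) \<Rightarrow> ('g list \<Rightarrow> 'a) \<Rightarrow> 'g list \<Rightarrow> 'a" where
  "wedge x z w = (\<Sum>k\<in>{..length w}. x (take k w) * z (drop k w))"

definition pair_words :: "('g \<Rightarrow> 'a::comm_ring_1) list \<Rightarrow> 'g list \<Rightarrow> 'a" where
  "pair_words fs xs =
     (if length fs = length xs then
        (\<Sum>s | s permutes {..<length xs}. of_int (sign s) * (\<Prod>i<length xs. (fs ! s i) (xs ! i)))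
      else 0)"

definition pair_word :: "(('g \<Rightarrow> 'a::comm_ring_1) list \<Rightarrow> 'a) \<Rightarrow> 'g list \<Rightarrow> 'a" where
  "pair_word f xs = (\<Sum>fs\<in>{fs. f fs \<noteq> 0}. f fs * pair_words fs xs)"

definition pair :: "(('g \<Rightarrow> 'a::comm_ring_1) list \<Rightarrow> 'a) \<Rightarrow> ('g list \<Rightarrow> 'a) \<Rightarrow> 'a" where
  "pair f t = (\<Sum>w\<in>{w. t w \<noteq> 0}. t w * pair_word f w)"

definition remove_at :: "nat set \<Rightarrow> 'b list \<Rightarrow> 'b list" where
  "remove_at S xs = map snd (filter (\<lambda>p. fst p \<notin> S) (zip [0..<length xs] xs))"

text \<open>de Rham differential of a cotensor, evaluated on a word x0 ... xk (the
  degree-k component of f is the only one contributing), then on a tensor.\<close>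
definition d_word :: "('g \<Rightarrow> 'g \<Rightarrow> 'g) \<Rightarrow> ('g \<Rightarrow> 'a::comm_ring_1 \<Rightarrow> 'a) \<Rightarrow>
    (('g \<Rightarrow> 'a) list \<Rightarrow> 'a) \<Rightarrow> 'g list \<Rightarrow> 'a" where
  "d_word br D f xs =
     (\<Sum>j<length xs. (-1) ^ j * D (xs ! j) (pair_word f (remove_at {j} xs))) +
     (\<Sum>(i, j)\<in>{(i, j). i < j \<and> j < length xs}.
        (-1) ^ (i + j) * pair_word f (br (xs ! i) (xs ! j) # remove_at {i, j} xs))"

definition d_pair :: "('g \<Rightarrow> 'g \<Rightarrow> 'g) \<Rightarrow> ('g \<Rightarrow> 'a::comm_ring_1 \<Rightarrow> 'a) \<Rightarrow>
    (('g \<Rightarrow> 'a) list \<Rightarrow> 'a) \<Rightarrow> ('g list \<Rightarrow> 'a) \<Rightarrow> 'a" where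
  "d_pair br D f t = (\<Sum>w\<in>{w. t w \<noteq> 0}. t w * d_word br D f w)"

text \<open>Contraction identities, expressed through the defining property
  of the right contraction: i_x f = h iff pair h z = pair f (x wedge z) for all tensors z.\<close>
definition contr_eq :: "('g list \<Rightarrow> 'a::comm_ring_1) \<Rightarrow> (('g \<Rightarrow> 'a) list \<Rightarrow> 'a) \<Rightarrow> (('g \<Rightarrow> 'a) list \<Rightarrow> 'a) \<Rightarrow> bool" where
  "contr_eq x f h \<longleftrightarrow> (\<forall>z. tensor z \<longrightarrow> pair f (wedge x z) = pair h z)"

definition contr_eq_d :: "('g \<Rightarrow> 'g \<Rightarrow> 'g) \<Rightarrow> ('g \<Rightarrow> 'a::comm_ring_1 \<Rightarrow> 'a) \<Rightarrow>
    ('g list \<Rightarrow> 'a) \<Rightarrow> (('g \<Rightarrow> 'a) list \<Rightarrow> 'a) \<Rightarrow> (('g \<Rightarrow> 'a) list \<Rightarrow> 'a) \<Rightarrow> bool" where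
  "contr_eq_d br D x f h \<longleftrightarrow> (\<forall>z. tensor z \<longrightarrow> pair f (wedge x z) = d_pair br D h z)"

definition ker :: "(('g \<Rightarrow> 'a::comm_ring_1) list \<Rightarrow> 'a) \<Rightarrow> ('g list \<Rightarrow> 'a) set" where
  "ker f = {x. tensor x \<and> (\<forall>z. tensor z \<longrightarrow> pair f (wedge x z) = 0)}"

definition n_plectic ::
  "('a::{comm_ring_1,real_algebra_1} \<Rightarrow> 'g::ab_group_add \<Rightarrow> 'g) \<Rightarrow> ('g \<Rightarrow> 'g \<Rightarrow> 'g) \<Rightarrow> ('g \<Rightarrow> 'a \<Rightarrow> 'a) \<Rightarrow>
   nat \<Rightarrow> (('g \<Rightarrow> 'a) list \<Rightarrow> 'a) \<Rightarrow> bool" where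
  "n_plectic smul br D n \<omega> \<longleftrightarrow>
     lie_rinehart_pair smul br D \<and> torsionless smul \<and>
     cotensor smul \<omega> \<and> cotensor_deg \<omega> (n + 1) \<and>
     (\<forall>z. tensor z \<longrightarrow> d_pair br D \<omega> z = 0)"

definition hamilton_cotensor ::
  "('a::{comm_ring_1,real_algebra_1} \<Rightarrow> 'g::ab_group_add \<Rightarrow> 'g) \<Rightarrow> ('g \<Rightarrow> 'g \<Rightarrow> 'g) \<Rightarrow> ('g \<Rightarrow> 'a \<Rightarrow> 'a) \<Rightarrow>
   (('g \<Rightarrow> 'a) list \<Rightarrow> 'a) \<Rightarrow> (('g \<Rightarrow> 'a) list \<Rightarrow> 'a) \<Rightarrow> bool" where
  "hamilton_cotensor smul br D \<omega> f \<longleftrightarrow>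
     cotensor smul f \<and> (\<exists>x. tensor x \<and> contr_eq_d br D x \<omega> f)"

definition Pois ::
  "('a::{comm_ring_1,real_algebra_1} \<Rightarrow> 'g::ab_group_add \<Rightarrow> 'g) \<Rightarrow> ('g \<Rightarrow> 'g \<Rightarrow> 'g) \<Rightarrow> ('g \<Rightarrow> 'a \<Rightarrow> 'a) \<Rightarrow>
   (('g \<Rightarrow> 'a) list \<Rightarrow> 'a) \<Rightarrow> (('g \<Rightarrow> 'a) list \<Rightarrow> 'a) set" where
  "Pois smul br D \<omega> =
     {f. hamilton_cotensor smul br D \<omega> f \<and> (\<exists>y. tensor y \<and> contr_eq y \<omega> f)}"

end

theory Submission
  imports Defs
begin

text \<open>
  Interchanging two adjacent letters of a word changes the sign of its pairing with any
  cotensor, so moving a block a past a block b costs (-1)^(|a| |b|). For u with i_u \<omega> = g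
  and x \<in> ker \<omega> this gives \<langle>g, x \<and> z\<rangle> = \<langle>\<omega>, u \<and> x \<and> z\<rangle> = \<plusminus>\<langle>\<omega>, x \<and> u \<and> z\<rangle> = 0, the sign
  being fixed word by word because \<omega> is homogeneous. Two tensors with the same contraction against \<omega> differ by an element of
  ker \<omega>, hence have the same contraction against every Poisson cotensor.
\<close>

lemma nth_swap_adjacent:
  assumes "j < length (p @ y # u # r)"
  shows "(p @ u # y # r) ! j = (p @ y # u # r) ! (transpose (length p) (Suc (length p)) j)"
proof -
  consider "j < length p" | "j = length p" | "j = Suc (length p)" | "j > Suc (length p)"
    by linarith
  then show ?thesis
  proof cases
    case 4
    then have "j - length p = Suc (Suc (j - length p - 2))" by simp
    with 4 show ?thesis by (simp add: nth_append transpose_def)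
  qed (simp_all add: nth_append transpose_def)
qed

lemma pair_words_swap_adjacent:
  "pair_words fs (p @ u # y # r) = - pair_words fs (p @ y # u # r)"
proof (cases "length fs = length (p @ y # u # r)")
  case False
  then show ?thesis by (simp add: pair_words_def)
next
  case True
  define L where "L = length (p @ y # u # r)"
  define w where "w = p @ y # u # r"
  define t where "t = transpose (length p) (Suc (length p))"
  have t_permutes: "t permutes {..<L}"
    unfolding t_def L_def by (rule permutes_swap_id) auto
  have sign_t: "sign t = -1"
    unfolding t_def by (simp add: sign_swap_id)
  have "pair_words fs (p @ u # y # r) =
      (\<Sum>s | s permutes {..<L}. of_int (sign s) * (\<Prod>i<L. (fs ! s i) (w ! t i)))"
    unfolding pair_words_def using True
    by (auto intro!: sum.cong prod.cong arg_cong2[where f="(*)"]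
        simp: L_def w_def t_def nth_swap_adjacent)
  also have "\<dots> = (\<Sum>s | s permutes {..<L}.
      of_int (sign (s \<circ> t)) * (\<Prod>i<L. (fs ! (s \<circ> t) i) (w ! t i)))"
    by (rule sum_permutations_compose_right[OF t_permutes])
  also have "\<dots> = (\<Sum>s | s permutes {..<L}. - (of_int (sign s) * (\<Prod>i<L. (fs ! s i) (w ! i))))"
  proof (rule sum.cong[OF refl])
    fix s assume "s \<in> {s. s permutes {..<L}}"
    then have s_permutes: "s permutes {..<L}" by simp
    have "sign (s \<circ> t) = - sign s"
      using sign_compose[of s t] permutation_permutes s_permutes t_permutes sign_t by fastforce
    moreover have "(\<Prod>i<L. (fs ! (s \<circ> t) i) (w ! t i)) = (\<Prod>i<L. (fs ! s i) (w ! i))"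
      using prod.reindex_bij_betw[OF permutes_imp_bij[OF t_permutes], of "\<lambda>i. (fs ! s i) (w ! i)"]
      by simp
    ultimately show "of_int (sign (s \<circ> t)) * (\<Prod>i<L. (fs ! (s \<circ> t) i) (w ! t i)) =
        - (of_int (sign s) * (\<Prod>i<L. (fs ! s i) (w ! i)))"
      by simp
  qed
  also have "\<dots> = - pair_words fs (p @ y # u # r)"
    unfolding pair_words_def using True by (simp add: L_def w_def sum_negf)
  finally show ?thesis .
qed

lemma pair_word_swap_adjacent:
  "pair_word f (p @ u # y # r) = - pair_word f (p @ y # u # r)"
  unfolding pair_word_def sum_negf[symmetric] by (subst pair_words_swap_adjacent) simp

lemma pair_word_move_letter:
  "pair_word f (p @ a @ y # r) = (-1) ^ length a * pair_word f (p @ y # a @ r)"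
proof (induction a arbitrary: p)
  case (Cons v a)
  have "pair_word f (p @ (v # a) @ y # r) = pair_word f ((p @ [v]) @ a @ y # r)" by simp
  also have "\<dots> = (-1) ^ length a * pair_word f ((p @ [v]) @ y # a @ r)" by (rule Cons.IH)
  also have "pair_word f ((p @ [v]) @ y # a @ r) = - pair_word f (p @ y # v # (a @ r))"
    using pair_word_swap_adjacent[of f p v y "a @ r"] by simp
  finally show ?case by simp
qed simp

lemma pair_word_swap_blocks:
  "pair_word f (p @ a @ b @ c) = (-1) ^ (length a * length b) * pair_word f (p @ b @ a @ c)"
proof (induction b arbitrary: p)
  case (Cons y b)
  have "pair_word f (p @ a @ (y # b) @ c) = (-1) ^ length a * pair_word f (p @ y # a @ b @ c)"
    using pair_word_move_letter[of f p a y "b @ c"] by simp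
  also have "pair_word f (p @ y # a @ b @ c) = pair_word f ((p @ [y]) @ a @ b @ c)" by simp
  also have "\<dots> = (-1) ^ (length a * length b) * pair_word f ((p @ [y]) @ b @ a @ c)"
    by (rule Cons.IH)
  finally show ?case by (simp add: power_add)
qed simp

lemma pair_word_nonzero_length:
  assumes "cotensor_deg f N" "pair_word f w \<noteq> 0"
  shows "length w = N"
proof (rule ccontr)
  assume "length w \<noteq> N"
  then have "\<forall>fs\<in>{fs. f fs \<noteq> 0}. f fs * pair_words fs w = 0"
    using assms(1) by (auto simp: cotensor_deg_def pair_words_def)
  then show False using assms(2) unfolding pair_word_def by simp
qed

text \<open>For homogeneous f the length of the middle block is determined by the outer ones,
  so the sign no longer depends on b.\<close>
lemma pair_word_swap_blocks_homogeneous: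
  assumes "cotensor_deg f N"
  shows "pair_word f (a @ b @ c) =
    (-1) ^ (length a * (N - length a - length c)) * pair_word f (b @ a @ c)"
proof (cases "pair_word f (b @ a @ c) = 0")
  case False
  then have "length b = N - length a - length c"
    using pair_word_nonzero_length[OF assms] by fastforce
  then show ?thesis using pair_word_swap_blocks[of f "[]" a b c] by simp
qed (use pair_word_swap_blocks[of f "[]" a b c] in simp)

lemma wedge_support_subset:
  assumes "{w. x w \<noteq> 0} \<subseteq> Sx" "{w. z w \<noteq> 0} \<subseteq> Sz"
  shows "{w. wedge x z w \<noteq> 0} \<subseteq> (\<lambda>(b, c). b @ c) ` (Sx \<times> Sz)"
proof
  fix w assume "w \<in> {w. wedge x z w \<noteq> 0}"
  then obtain k where "x (take k w) * z (drop k w) \<noteq> 0"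
    unfolding wedge_def by (auto elim: sum.not_neutral_contains_not_neutral)
  then have "take k w \<in> Sx" "drop k w \<in> Sz" using assms by auto
  then show "w \<in> (\<lambda>(b, c). b @ c) ` (Sx \<times> Sz)"
    by (intro image_eqI[of _ _ "(take k w, drop k w)"]) auto
qed

lemma tensor_wedge: "tensor x \<Longrightarrow> tensor z \<Longrightarrow> tensor (wedge x z)"
  unfolding tensor_def using wedge_support_subset[of x _ z]
  by (meson finite_SigmaI finite_imageI finite_subset order_refl)

lemma tensor_diff:
  fixes y :: "'g list \<Rightarrow> 'a::ab_group_add"
  shows "tensor y \<Longrightarrow> tensor y' \<Longrightarrow> tensor (y - y')"
  unfolding tensor_def
  by (rule finite_subset[of _ "{w. y w \<noteq> 0} \<union> {w. y' w \<noteq> 0}"]) auto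

lemma wedge_diff_left: "wedge (y - y') z = wedge y z - wedge y' z"
  by (simp add: wedge_def fun_eq_iff left_diff_distrib sum_subtractf)

lemma sum_wedge_support:
  assumes "finite Sx" "{w. x w \<noteq> 0} \<subseteq> Sx" "finite Sz" "{w. z w \<noteq> 0} \<subseteq> Sz"
  shows "(\<Sum>w\<in>{w. wedge x z w \<noteq> 0}. wedge x z w * P w) =
    (\<Sum>b\<in>Sx. \<Sum>c\<in>Sz. x b * z c * P (b @ c))"
proof -
  define T where "T = (\<lambda>(b, c). b @ c) ` (Sx \<times> Sz)"
  define split_of where "split_of w = {bc \<in> Sx \<times> Sz. fst bc @ snd bc = w}" for w
  have "finite T" unfolding T_def using assms by simp
  then have "(\<Sum>w\<in>{w. wedge x z w \<noteq> 0}. wedge x z w * P w) = (\<Sum>w\<in>T. wedge x z w * P w)"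
    using wedge_support_subset[OF assms(2,4)] by (intro sum.mono_neutral_left) (auto simp: T_def)
  also have "\<dots> = (\<Sum>w\<in>T. \<Sum>bc\<in>split_of w. x (fst bc) * z (snd bc) * P (fst bc @ snd bc))"
  proof (rule sum.cong[OF refl])
    fix w
    define K where "K = {k. k \<le> length w \<and> take k w \<in> Sx \<and> drop k w \<in> Sz}"
    have "wedge x z w = (\<Sum>k\<in>K. x (take k w) * z (drop k w))"
      unfolding wedge_def using assms(2,4) by (intro sum.mono_neutral_right) (auto simp: K_def)
    also have "\<dots> = (\<Sum>bc\<in>split_of w. x (fst bc) * z (snd bc))"
      by (rule sum.reindex_bij_witness[of _ "\<lambda>bc. length (fst bc)" "\<lambda>k. (take k w, drop k w)"])
        (auto simp: K_def split_of_def)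
    finally show "wedge x z w * P w =
        (\<Sum>bc\<in>split_of w. x (fst bc) * z (snd bc) * P (fst bc @ snd bc))"
      by (simp add: sum_distrib_right split_of_def)
  qed
  also have "\<dots> = (\<Sum>bc\<in>Sx \<times> Sz. x (fst bc) * z (snd bc) * P (fst bc @ snd bc))"
    unfolding T_def split_of_def using assms
    by (subst sum.image_gen[of "Sx \<times> Sz" _ "\<lambda>bc. fst bc @ snd bc"])
      (auto simp: case_prod_beta' intro!: sum.cong)
  also have "\<dots> = (\<Sum>b\<in>Sx. \<Sum>c\<in>Sz. x b * z c * P (b @ c))"
    by (simp add: sum.cartesian_product case_prod_beta')
  finally show ?thesis .
qed

lemma pair_wedge:
  assumes "finite Sx" "{w. x w \<noteq> 0} \<subseteq> Sx" "finite Sz" "{w. z w \<noteq> 0} \<subseteq> Sz"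
  shows "pair f (wedge x z) = (\<Sum>b\<in>Sx. \<Sum>c\<in>Sz. x b * z c * pair_word f (b @ c))"
  unfolding pair_def by (rule sum_wedge_support[OF assms])

lemma pair_diff:
  assumes "tensor t" "tensor t'"
  shows "pair f (t - t') = pair f t - pair f t'"
proof -
  let ?S = "{w. t w \<noteq> 0} \<union> {w. t' w \<noteq> 0}"
  have "finite ?S" using assms by (simp add: tensor_def)
  have pair_on_S: "pair f s = (\<Sum>w\<in>?S. s w * pair_word f w)" if "{w. s w \<noteq> 0} \<subseteq> ?S" for s
    unfolding pair_def using \<open>finite ?S\<close> that by (intro sum.mono_neutral_left) auto
  have "pair f (t - t') = (\<Sum>w\<in>?S. (t w - t' w) * pair_word f w)"
    by (subst pair_on_S) auto
  also have "\<dots> = pair f t - pair f t'"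
    by (simp add: pair_on_S left_diff_distrib sum_subtractf)
  finally show ?thesis .
qed

text \<open>The sum below is \<langle>\<omega>, x \<and> a \<and> z\<rangle>, the word a read as a tensor.\<close>
lemma ker_pair_insert_word:
  fixes \<omega> :: "('g \<Rightarrow> 'a::comm_ring_1) list \<Rightarrow> 'a"
  assumes x_ker: "x \<in> ker \<omega>" and "tensor z"
    and Sx: "finite Sx" "{w. x w \<noteq> 0} \<subseteq> Sx" and Sz: "finite Sz" "{w. z w \<noteq> 0} \<subseteq> Sz"
  shows "(\<Sum>b\<in>Sx. \<Sum>c\<in>Sz. x b * z c * pair_word \<omega> (b @ a @ c)) = 0"
proof -
  define word :: "'g list \<Rightarrow> 'a" where "word w = (if w = a then 1 else 0)" for w
  define Z where "Z = wedge word z"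
  have word_support: "{w. word w \<noteq> 0} \<subseteq> {a}" by (auto simp: word_def)
  have "tensor word" unfolding tensor_def using finite_subset[OF word_support] by simp
  then have "tensor Z" unfolding Z_def using \<open>tensor z\<close> by (rule tensor_wedge)
  then have "0 = pair \<omega> (wedge x Z)" using x_ker by (simp add: ker_def)
  also have "\<dots> = (\<Sum>b\<in>Sx. x b * (\<Sum>w\<in>{w. Z w \<noteq> 0}. Z w * pair_word \<omega> (b @ w)))"
    using \<open>tensor Z\<close> by (subst pair_wedge[OF Sx]) (auto simp: tensor_def sum_distrib_left mult.assoc)
  also have "\<dots> = (\<Sum>b\<in>Sx. x b * (\<Sum>a'\<in>{a}. \<Sum>c\<in>Sz. word a' * z c * pair_word \<omega> (b @ a' @ c)))"
    unfolding Z_def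
    by (intro sum.cong refl arg_cong2[where f="(*)"] sum_wedge_support[OF _ word_support Sz]) auto
  also have "\<dots> = (\<Sum>b\<in>Sx. \<Sum>c\<in>Sz. x b * z c * pair_word \<omega> (b @ a @ c))"
    by (simp add: sum_distrib_left mult.assoc word_def)
  finally show ?thesis by simp
qed

lemma ker_pair_wedge_left:
  fixes \<omega> :: "('g \<Rightarrow> 'a::comm_ring_1) list \<Rightarrow> 'a"
  assumes deg: "cotensor_deg \<omega> N" and x_ker: "x \<in> ker \<omega>" and "tensor u" "tensor z"
  shows "pair \<omega> (wedge u (wedge x z)) = 0"
proof -
  define Sx where "Sx = {w. x w \<noteq> 0}"
  define Sz where "Sz = {w. z w \<noteq> 0}"
  have "tensor x" using x_ker by (simp add: ker_def)
  then have fin: "finite Sx" "finite Sz" "finite {w. u w \<noteq> 0}"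
    using \<open>tensor z\<close> \<open>tensor u\<close> by (simp_all add: Sx_def Sz_def tensor_def)
  have inner_zero: "(\<Sum>b\<in>Sx. \<Sum>c\<in>Sz. x b * z c * pair_word \<omega> (a @ b @ c)) = 0" for a
  proof -
    \<comment> \<open>absorb the sign of moving a past b into a twisted copy of z\<close>
    define z' where "z' c = (-1) ^ (length a * (N - length a - length c)) * z c" for c
    have z'_support: "{c. z' c \<noteq> 0} \<subseteq> Sz" by (auto simp: z'_def Sz_def)
    then have "tensor z'" using fin(2) unfolding tensor_def by (rule finite_subset)
    have "(\<Sum>b\<in>Sx. \<Sum>c\<in>Sz. x b * z c * pair_word \<omega> (a @ b @ c)) =
        (\<Sum>b\<in>Sx. \<Sum>c\<in>Sz. x b * z' c * pair_word \<omega> (b @ a @ c))"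
      by (intro sum.cong refl) (simp add: pair_word_swap_blocks_homogeneous[OF deg, of a] z'_def)
    also have "\<dots> = 0"
      using \<open>tensor z'\<close> fin z'_support by (intro ker_pair_insert_word[OF x_ker]) (auto simp: Sx_def)
    finally show ?thesis .
  qed
  have "pair \<omega> (wedge u (wedge x z)) = (\<Sum>a\<in>{w. u w \<noteq> 0}. u a *
      (\<Sum>w\<in>{w. wedge x z w \<noteq> 0}. wedge x z w * pair_word \<omega> (a @ w)))"
    using tensor_wedge[OF \<open>tensor x\<close> \<open>tensor z\<close>] fin
    by (subst pair_wedge) (auto simp: tensor_def sum_distrib_left mult.assoc)
  also have "\<dots> = (\<Sum>a\<in>{w. u w \<noteq> 0}. u a *
      (\<Sum>b\<in>Sx. \<Sum>c\<in>Sz. x b * z c * pair_word \<omega> (a @ b @ c)))"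
    using fin by (intro sum.cong refl arg_cong2[where f="(*)"] sum_wedge_support)
      (auto simp: Sx_def Sz_def)
  also have "\<dots> = 0" by (simp add: inner_zero)
  finally show ?thesis .
qed

lemma ker_subset_ker_contr:
  assumes "cotensor_deg \<omega> N" "tensor u" "contr_eq u \<omega> g"
  shows "ker \<omega> \<subseteq> ker g"
proof
  fix x assume x_ker: "x \<in> ker \<omega>"
  then have "tensor x" by (simp add: ker_def)
  have "pair g (wedge x z) = 0" if "tensor z" for z
  proof -
    have "pair g (wedge x z) = pair \<omega> (wedge u (wedge x z))"
      using assms(3) tensor_wedge[OF \<open>tensor x\<close> that] by (simp add: contr_eq_def)
    also have "\<dots> = 0" using ker_pair_wedge_left[OF assms(1) x_ker assms(2) that] .
    finally show ?thesis .
  qed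
  then show "x \<in> ker g" using \<open>tensor x\<close> by (simp add: ker_def)
qed

lemma ker_subset_ker_Pois:
  assumes "cotensor_deg \<omega> N" "g \<in> Pois smul br D \<omega>"
  shows "ker \<omega> \<subseteq> ker g"
  using assms ker_subset_ker_contr by (fastforce simp: Pois_def)

lemma pair_wedge_eq_iff_diff_in_ker:
  assumes "tensor y" "tensor y'"
  shows "y - y' \<in> ker f \<longleftrightarrow>
    (\<forall>z. tensor z \<longrightarrow> pair f (wedge y z) = pair f (wedge y' z))"
proof -
  have "pair f (wedge (y - y') z) = pair f (wedge y z) - pair f (wedge y' z)" if "tensor z" for z
    using pair_diff[OF tensor_wedge[OF assms(1) that] tensor_wedge[OF assms(2) that]]
    by (simp add: wedge_diff_left)
  then show ?thesis using tensor_diff[OF assms] by (auto simp: ker_def)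
qed

lemma same_contraction_against_Pois:
  assumes "cotensor_deg \<omega> N" "tensor y" "tensor y'"
    and "\<forall>z. tensor z \<longrightarrow> pair \<omega> (wedge y z) = pair \<omega> (wedge y' z)"
  shows "y - y' \<in> ker \<omega> \<and>
    (\<forall>g\<in>Pois smul br D \<omega>. \<forall>z. tensor z \<longrightarrow> pair g (wedge y z) = pair g (wedge y' z))"
  using assms ker_subset_ker_Pois[OF assms(1)] pair_wedge_eq_iff_diff_in_ker[OF assms(2,3)]
  by blast

theorem mainTheorem1:
  fixes smul :: "'a::{comm_ring_1,real_algebra_1} \<Rightarrow> 'g::ab_group_add \<Rightarrow> 'g"
    and br :: "'g \<Rightarrow> 'g \<Rightarrow> 'g"
    and D :: "'g \<Rightarrow> 'a \<Rightarrow> 'a"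
    and n :: nat
    and \<omega> f :: "('g \<Rightarrow> 'a) list \<Rightarrow> 'a"
  assumes "n_plectic smul br D n \<omega>"
    and "f \<in> Pois smul br D \<omega>"
  shows "ker \<omega> \<subseteq> ker f \<and>
    (\<forall>y y'. tensor y \<longrightarrow> tensor y' \<longrightarrow> contr_eq y \<omega> f \<longrightarrow> contr_eq y' \<omega> f \<longrightarrow>
       (y - y') \<in> ker \<omega> \<and>
       (\<forall>g\<in>Pois smul br D \<omega>. \<forall>z. tensor z \<longrightarrow> pair g (wedge y z) = pair g (wedge y' z))) \<and>
    (\<forall>x x'. tensor x \<longrightarrow> tensor x' \<longrightarrow> contr_eq_d br D x \<omega> f \<longrightarrow> contr_eq_d br D x' \<omega> f \<longrightarrow>
       (x - x') \<in> ker \<omega> \<and>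
       (\<forall>g\<in>Pois smul br D \<omega>. \<forall>z. tensor z \<longrightarrow> pair g (wedge x z) = pair g (wedge x' z)))"
proof -
  have deg: "cotensor_deg \<omega> (n + 1)" using assms(1) by (simp add: n_plectic_def)
  have same_pairing: "\<forall>z. tensor z \<longrightarrow> pair \<omega> (wedge y z) = pair \<omega> (wedge y' z)"
    if "contr_eq y \<omega> f \<and> contr_eq y' \<omega> f \<or> contr_eq_d br D y \<omega> f \<and> contr_eq_d br D y' \<omega> f"
    for y y'
    using that by (auto simp: contr_eq_def contr_eq_d_def)
  show ?thesis
    using ker_subset_ker_Pois[OF deg assms(2)] same_contraction_against_Pois[OF deg _ _ same_pairing]
    by blast
qed

end
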